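(* Consider a two-dimensional no-slip billiard system in a disc. If the first collision satisfies the rolling impact condition, then all subsequent collisions also satisfy it, the times between consecutive collisions are all equal, and the center of mass of the moving particle undergoes specular reflection at each collision (i.e. the post-collision center-of-mass velocity is $u-2(u\cdot\nu_a)\nu_a$ where $u$ is the pre-collision one).
   Context: Here $n=2$: the moving particle is a disc of radius $r>0$ with a rotationally symmetric mass distribution of total mass $m$ whose second-moment matrix per unit mass is $\lambda I$, $\lambda=(r\gamma)^2/2$, $\gamma>0$. Put $c=\frac{1-\gamma^2}{1+\gamma^2}$, $s=\frac{2\gamma}{1+\gamma^2}$, and for $a,b\in\mathbb{R}^2$ let $a\wedge b\in\mathfrak{so}(2)$ be $(a\wedge b)x=(a\cdot x)b-(b\cdot x)a$. The billiard domain $\mathcal{B}$ (the set of admissible centers) is a disc; at $a\in\partial\mathcal{B}$, $\nu_a$ is the unit normal pointing into $\mathcal{B}$. A state is $(a,u,U)$ with $u$ the center-of-mass velocity and $U\in\mathfrak{so}(2)$ the angular velocity matrix. Between collisions $U$ is constant and the center of mass moves freely; at a collision at $a$ the pre-collision $(u,U)$ is replaced by $C_a(u,U)=\big(cu-\tfrac{s}{\gamma}(u\cdot\nu_a)\nu_a+s\gamma rU\nu_a,\ \tfrac{s}{\gamma r}\nu_a\wedge u+U-\tfrac{s}{\gamma}\nu_a\wedge U\nu_a\big)$. A pre-collision state $(a,u,U)$ satisfies the rolling impact condition if the orthogonal projection of $v=u-rU\nu_a$ onto the tangent line $T_a\partial\mathcal{B}$ is zero. *)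

theory Defs
  imports "HOL-Analysis.Analysis"
begin

type_synonym vec2 = "real^2"
type_synonym mat2 = "real^2^2"

text \<open>Vectors of the plane are
  \<open>real^2\<close>, angular velocity matrices are \<open>real^2^2\<close> (elements of so(2) are
  the skew-symmetric ones). The billiard domain (set of admissible centers)
  is the disc \<open>cball p R\<close>, with boundary \<open>sphere p R\<close>.\<close>

text \<open>The wedge \<open>a \<and> b\<close>, acting by \<open>x \<mapsto> (a\<bullet>x) b - (b\<bullet>x) a\<close>.\<close>
definition wedge :: "real^2 \<Rightarrow> real^2 \<Rightarrow> real^2^2" where
  "wedge a b = (\<chi> i j. b$i * a$j - a$i * b$j)"

definition in_so2 :: "real^2^2 \<Rightarrow> bool" where
  "in_so2 U \<longleftrightarrow> transpose U = - U"

definition inward_normal :: "real^2 \<Rightarrow> real \<Rightarrow> real^2 \<Rightarrow> real^2" where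
  "inward_normal p R a = (1 / R) *\<^sub>R (p - a)"

definition cc :: "real \<Rightarrow> real" where "cc \<gamma> = (1 - \<gamma>^2) / (1 + \<gamma>^2)"
definition ss :: "real \<Rightarrow> real" where "ss \<gamma> = (2 * \<gamma>) / (1 + \<gamma>^2)"

definition collision_map ::
  "real \<Rightarrow> real \<Rightarrow> real^2 \<Rightarrow> vec2 \<times> mat2 \<Rightarrow> vec2 \<times> mat2" where
  "collision_map \<gamma> r \<nu> uU = (case uU of (u, U) \<Rightarrow>
     (cc \<gamma> *\<^sub>R u - (ss \<gamma> / \<gamma>) *\<^sub>R ((u \<bullet> \<nu>) *\<^sub>R \<nu>) + (ss \<gamma> * \<gamma> * r) *\<^sub>R (U *v \<nu>),
      (ss \<gamma> / (\<gamma> * r)) *\<^sub>R wedge \<nu> u + U - (ss \<gamma> / \<gamma>) *\<^sub>R wedge \<nu> (U *v \<nu>)))"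

definition rolling_impact :: "real^2 \<Rightarrow> real \<Rightarrow> real \<Rightarrow> real^2 \<Rightarrow> real^2 \<Rightarrow> real^2^2 \<Rightarrow> bool" where
  "rolling_impact p R r a u U \<longleftrightarrow>
     (let \<nu> = inward_normal p R a; v = u - r *\<^sub>R (U *v \<nu>) in v - (v \<bullet> \<nu>) *\<^sub>R \<nu> = 0)"

definition next_time :: "real^2 \<Rightarrow> real \<Rightarrow> real^2 \<Rightarrow> real^2 \<Rightarrow> real" where
  "next_time p R a w = Inf {t. 0 < t \<and> a + t *\<^sub>R w \<in> sphere p R}"

text \<open>The sequence of pre-collision states \<open>(a_k, u_k, U_k)\<close> at the k-th collision
  (k = 0 is the first collision).\<close>
fun collisions :: "real \<Rightarrow> real \<Rightarrow> real^2 \<Rightarrow> real \<Rightarrow> vec2 \<times> vec2 \<times> mat2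
                   \<Rightarrow> nat \<Rightarrow> vec2 \<times> vec2 \<times> mat2" where
  "collisions \<gamma> r p R s0 0 = s0"
| "collisions \<gamma> r p R s0 (Suc k) =
     (case collisions \<gamma> r p R s0 k of (a, u, U) \<Rightarrow>
        (case collision_map \<gamma> r (inward_normal p R a) (u, U) of (u', U') \<Rightarrow>
           (a + next_time p R a u' *\<^sub>R u', u', U')))"

definition flight_time :: "real \<Rightarrow> real \<Rightarrow> real^2 \<Rightarrow> real \<Rightarrow> vec2 \<times> vec2 \<times> mat2
                   \<Rightarrow> nat \<Rightarrow> real" where
  "flight_time \<gamma> r p R s0 k = (case collisions \<gamma> r p R s0 k of (a, u, U) \<Rightarrow>
      next_time p R a (fst (collision_map \<gamma> r (inward_normal p R a) (u, U))))"

end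

(* In the plane every U in so(2) is omega J, with J the rotation by a right angle, and for a unit
   normal nu the rolling impact condition reads (J nu) . u = r omega.  Under this condition the
   no-slip collision map fixes U and reflects u specularly.  In a disc the reflected chord is
   congruent to the incoming one: the next normal is nu - (t/R) w, so u . nu, |u| and (J nu) . u
   are all preserved.  Hence the rolling condition persists, and the flight time
   -2 R (u . nu) / |u|^2 is the same between any two consecutive collisions. *)

theory Submission
  imports Defs
begin

lemma vec2_eq_iff: "(x::real^2) = y \<longleftrightarrow> x$1 = y$1 \<and> x$2 = y$2"
  by (simp add: vec_eq_iff forall_2)

lemma mat2_eq_iff:
  "(A::real^2^2) = B \<longleftrightarrow> A$1$1 = B$1$1 \<and> A$1$2 = B$1$2 \<and> A$2$1 = B$2$1 \<and> A$2$2 = B$2$2"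
  by (simp add: vec_eq_iff forall_2)

lemma inner_vec2: "(x::real^2) \<bullet> y = x$1 * y$1 + x$2 * y$2"
  by (simp add: inner_vec_def sum_2)

definition rot90 :: "real^2 \<Rightarrow> real^2" where
  "rot90 x = vector [- x$2, x$1]"

definition rot90_mat :: "real^2^2" where
  "rot90_mat = vector [vector [0, -1], vector [1, 0]]"

lemma inner_rot90_self [simp]: "rot90 x \<bullet> x = 0"
  by (simp add: rot90_def inner_vec2)

lemma inner_rot90_rot90 [simp]: "rot90 x \<bullet> rot90 y = x \<bullet> y"
  by (simp add: rot90_def inner_vec2 algebra_simps)

lemma rot90_diff: "rot90 (x - y) = rot90 x - rot90 y"
  by (simp add: rot90_def vec2_eq_iff)

lemma rot90_scaleR: "rot90 (c *\<^sub>R x) = c *\<^sub>R rot90 x"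
  by (simp add: rot90_def vec2_eq_iff)

lemma rot90_mat_mult: "rot90_mat *v x = rot90 x"
  by (simp add: rot90_mat_def rot90_def vec2_eq_iff matrix_vector_mult_def sum_2)

lemma in_so2_eq_rot90_mat:
  assumes "in_so2 U"
  shows "U = U$2$1 *\<^sub>R rot90_mat"
proof -
  have skew: "U$j$i = - U$i$j" for i j
    using arg_cong[OF assms[unfolded in_so2_def], of "\<lambda>M. M$i$j"] by (simp add: transpose_def)
  have "U$1$1 = 0" "U$2$2 = 0" "U$1$2 = - U$2$1"
    using skew[of 1 1] skew[of 2 2] skew[of 2 1] by simp_all
  then show ?thesis
    unfolding mat2_eq_iff by (simp add: rot90_mat_def)
qed

lemma wedge_vec2: "wedge a b = (rot90 a \<bullet> b) *\<^sub>R rot90_mat"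
  unfolding mat2_eq_iff by (simp add: wedge_def rot90_mat_def rot90_def inner_vec2 algebra_simps)

lemma vec2_orthonormal_decomp:
  assumes "n \<bullet> n = 1"
  shows "v = (v \<bullet> n) *\<^sub>R n + (rot90 n \<bullet> v) *\<^sub>R rot90 n"
proof -
  have "n$1 * n$1 + n$2 * n$2 = 1"
    using assms by (simp add: inner_vec2)
  then show ?thesis
    unfolding vec2_eq_iff by (simp add: rot90_def inner_vec2) algebra
qed

lemma tangential_part_eq_0_iff:
  assumes "n \<bullet> n = 1"
  shows "v - (v \<bullet> n) *\<^sub>R n = 0 \<longleftrightarrow> rot90 n \<bullet> v = 0"
proof -
  have "v - (v \<bullet> n) *\<^sub>R n = (rot90 n \<bullet> v) *\<^sub>R rot90 n"
    using vec2_orthonormal_decomp[OF assms, of v] by (simp add: algebra_simps)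
  moreover have "rot90 n \<noteq> 0"
    by (metis assms inner_rot90_rot90 inner_zero_left zero_neq_one)
  ultimately show ?thesis
    by simp
qed

lemma cc_eq: "cc \<gamma> = 1 - ss \<gamma> * \<gamma>"
proof -
  have "1 + \<gamma>^2 \<noteq> 0"
    by (smt (verit) zero_le_power2)
  then show ?thesis
    by (simp add: cc_def ss_def field_simps power2_eq_square)
qed

lemma ss_div_eq:
  assumes "\<gamma> \<noteq> 0"
  shows "ss \<gamma> / \<gamma> = 2 - ss \<gamma> * \<gamma>"
proof -
  have "1 + \<gamma>^2 \<noteq> 0"
    by (smt (verit) zero_le_power2)
  have "ss \<gamma> / \<gamma> = 2 / (1 + \<gamma>^2)"
    using assms by (simp add: ss_def)
  also have "\<dots> = 2 - ss \<gamma> * \<gamma>"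
    using \<open>1 + \<gamma>^2 \<noteq> 0\<close> by (simp add: ss_def field_simps power2_eq_square)
  finally show ?thesis .
qed

definition reflect :: "real^2 \<Rightarrow> real^2 \<Rightarrow> real^2" where
  "reflect n u = u - (2 * (u \<bullet> n)) *\<^sub>R n"

lemma inner_reflect_normal:
  assumes "n \<bullet> n = 1"
  shows "reflect n u \<bullet> n = - (u \<bullet> n)"
  using assms by (simp add: reflect_def inner_diff_left)

lemma inner_reflect_reflect:
  assumes "n \<bullet> n = 1"
  shows "reflect n u \<bullet> reflect n u = u \<bullet> u"
  using assms by (simp add: reflect_def inner_diff_left inner_diff_right inner_commute)

lemma inner_rot90_reflect: "rot90 n \<bullet> reflect n u = rot90 n \<bullet> u"
  by (simp add: reflect_def inner_diff_right)

lemma collision_map_rolling: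
  assumes "\<gamma> \<noteq> 0" and "r \<noteq> 0" and unit: "n \<bullet> n = 1" and "in_so2 U"
    and rolling: "rot90 n \<bullet> u = r * U$2$1"
  shows "collision_map \<gamma> r n (u, U) = (reflect n u, U)"
proof -
  define \<omega> where "\<omega> = U$2$1"
  have U: "U = \<omega> *\<^sub>R rot90_mat"
    using in_so2_eq_rot90_mat[OF \<open>in_so2 U\<close>] by (simp add: \<omega>_def)
  have Un: "U *v n = \<omega> *\<^sub>R rot90 n"
    unfolding U by (simp add: scaleR_matrix_vector_assoc[symmetric] rot90_mat_mult)
  have tangential: "(r * \<omega>) *\<^sub>R rot90 n = u - (u \<bullet> n) *\<^sub>R n"
    using vec2_orthonormal_decomp[OF unit, of u] rolling by (simp add: \<omega>_def algebra_simps)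
  have "cc \<gamma> *\<^sub>R u - (ss \<gamma> / \<gamma>) *\<^sub>R ((u \<bullet> n) *\<^sub>R n) + (ss \<gamma> * \<gamma> * r) *\<^sub>R (U *v n)
      = (1 - ss \<gamma> * \<gamma>) *\<^sub>R u - (2 - ss \<gamma> * \<gamma>) *\<^sub>R ((u \<bullet> n) *\<^sub>R n)
        + (ss \<gamma> * \<gamma>) *\<^sub>R (u - (u \<bullet> n) *\<^sub>R n)"
    by (simp add: cc_eq ss_div_eq[OF \<open>\<gamma> \<noteq> 0\<close>] Un tangential[symmetric])
  also have "\<dots> = reflect n u"
    by (simp add: reflect_def algebra_simps)
  finally have velocity: "cc \<gamma> *\<^sub>R u - (ss \<gamma> / \<gamma>) *\<^sub>R ((u \<bullet> n) *\<^sub>R n)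
      + (ss \<gamma> * \<gamma> * r) *\<^sub>R (U *v n) = reflect n u" .
  have "wedge n u = (r * \<omega>) *\<^sub>R rot90_mat"
    using rolling by (simp add: wedge_vec2 \<omega>_def)
  moreover have "wedge n (U *v n) = \<omega> *\<^sub>R rot90_mat"
    using unit by (simp add: wedge_vec2 Un)
  ultimately have spin: "(ss \<gamma> / (\<gamma> * r)) *\<^sub>R wedge n u + U - (ss \<gamma> / \<gamma>) *\<^sub>R wedge n (U *v n) = U"
    using \<open>r \<noteq> 0\<close> by (simp add: U)
  show ?thesis
    unfolding collision_map_def using velocity spin by simp
qed

lemma inward_normal_unit:
  assumes "a \<in> sphere p R" and "R \<noteq> 0"
  shows "inward_normal p R a \<bullet> inward_normal p R a = 1"
proof -
  have "(p - a) \<bullet> (p - a) = R^2"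
    using assms(1) by (simp add: dist_norm power2_norm_eq_inner[symmetric])
  then show ?thesis
    using assms(2) by (simp add: inward_normal_def power2_eq_square)
qed

lemma inward_normal_translate:
  "inward_normal p R (a + t *\<^sub>R w) = inward_normal p R a - (t / R) *\<^sub>R w"
  by (simp add: inward_normal_def algebra_simps)

lemma rolling_impact_iff:
  assumes "a \<in> sphere p R" and "R \<noteq> 0" and "in_so2 U"
  shows "rolling_impact p R r a u U \<longleftrightarrow> rot90 (inward_normal p R a) \<bullet> u = r * U$2$1"
proof -
  define n where "n = inward_normal p R a"
  have unit: "n \<bullet> n = 1"
    using inward_normal_unit[OF assms(1,2)] by (simp add: n_def)
  have "U *v n = U$2$1 *\<^sub>R rot90 n"
    by (subst in_so2_eq_rot90_mat[OF assms(3)])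
      (simp add: scaleR_matrix_vector_assoc[symmetric] rot90_mat_mult)
  then have "rot90 n \<bullet> (u - r *\<^sub>R (U *v n)) = rot90 n \<bullet> u - r * U$2$1"
    using unit by (simp add: inner_diff_right)
  then show ?thesis
    unfolding rolling_impact_def Let_def n_def[symmetric] tangential_part_eq_0_iff[OF unit]
    by simp
qed

lemma sphere_ray_iff:
  assumes "a \<in> sphere p R"
  shows "a + t *\<^sub>R w \<in> sphere p R \<longleftrightarrow> t * (t * (w \<bullet> w) - 2 * (w \<bullet> (p - a))) = 0"
proof -
  define d where "d = p - a"
  have "R \<ge> 0" and dd: "d \<bullet> d = R^2"
    using assms by (auto simp: d_def dist_norm power2_norm_eq_inner[symmetric])
  have "a + t *\<^sub>R w \<in> sphere p R \<longleftrightarrow> norm (d - t *\<^sub>R w) = R"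
    by (simp add: d_def dist_norm diff_diff_eq)
  also have "\<dots> \<longleftrightarrow> (d - t *\<^sub>R w) \<bullet> (d - t *\<^sub>R w) = R^2"
    using \<open>R \<ge> 0\<close> by (metis norm_ge_zero power2_eq_imp_eq power2_norm_eq_inner)
  also have "\<dots> \<longleftrightarrow> t * (t * (w \<bullet> w) - 2 * (w \<bullet> d)) = 0"
    using dd by (simp add: inner_diff_left inner_diff_right inner_commute algebra_simps power2_eq_square)
  finally show ?thesis
    by (simp add: d_def)
qed

lemma next_time_sphere:
  assumes "a \<in> sphere p R" and "w \<bullet> (p - a) > 0"
  shows "next_time p R a w = 2 * (w \<bullet> (p - a)) / (w \<bullet> w)"
    and "a + next_time p R a w *\<^sub>R w \<in> sphere p R"
proof -
  have "w \<bullet> w > 0"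
    using assms(2) by (metis inner_gt_zero_iff inner_zero_left less_irrefl)
  define t0 where "t0 = 2 * (w \<bullet> (p - a)) / (w \<bullet> w)"
  have "t0 > 0"
    using \<open>w \<bullet> w > 0\<close> assms(2) by (simp add: t0_def)
  have t0_root: "t0 * (w \<bullet> w) = 2 * (w \<bullet> (p - a))"
    using \<open>w \<bullet> w > 0\<close> by (simp add: t0_def)
  have hits: "0 < t \<and> a + t *\<^sub>R w \<in> sphere p R \<longleftrightarrow> t = t0" for t
    unfolding sphere_ray_iff[OF assms(1)]
  proof
    assume "0 < t \<and> t * (t * (w \<bullet> w) - 2 * (w \<bullet> (p - a))) = 0"
    then have "t * (w \<bullet> w) = t0 * (w \<bullet> w)"
      using t0_root by auto
    then show "t = t0"
      using \<open>w \<bullet> w > 0\<close> by simp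
  qed (use \<open>t0 > 0\<close> t0_root in simp)
  then have "{t. 0 < t \<and> a + t *\<^sub>R w \<in> sphere p R} = {t0}"
    by blast
  then have "next_time p R a w = t0"
    by (simp add: next_time_def)
  then show "next_time p R a w = 2 * (w \<bullet> (p - a)) / (w \<bullet> w)"
    and "a + next_time p R a w *\<^sub>R w \<in> sphere p R"
    using hits[of t0] by (simp_all add: t0_def)
qed

lemma flight_after_reflection:
  assumes "a \<in> sphere p R" and "R > 0" and incoming: "u \<bullet> n < 0"
    and n_def: "n = inward_normal p R a"
    and w_def: "w = reflect n u"
    and a'_def: "a' = a + next_time p R a w *\<^sub>R w"
  shows "next_time p R a w = - 2 * R * (u \<bullet> n) / (u \<bullet> u)"
    and "a' \<in> sphere p R"
    and "w \<bullet> inward_normal p R a' = u \<bullet> n"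
    and "rot90 (inward_normal p R a') \<bullet> w = rot90 n \<bullet> u"
proof -
  have unit: "n \<bullet> n = 1"
    using inward_normal_unit[OF assms(1)] \<open>R > 0\<close> by (simp add: n_def)
  have wn: "w \<bullet> n = - (u \<bullet> n)" and ww: "w \<bullet> w = u \<bullet> u"
    using inner_reflect_normal[OF unit] inner_reflect_reflect[OF unit] by (simp_all add: w_def)
  have "p - a = R *\<^sub>R n"
    using \<open>R > 0\<close> by (simp add: n_def inward_normal_def)
  then have w_pa: "w \<bullet> (p - a) = - R * (u \<bullet> n)"
    using wn by simp
  then have outgoing: "w \<bullet> (p - a) > 0"
    using \<open>R > 0\<close> incoming by (simp add: mult_pos_neg)
  have "u \<bullet> u > 0"
    using incoming by (metis inner_gt_zero_iff inner_zero_left less_irrefl)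
  define t where "t = next_time p R a w"
  show t: "next_time p R a w = - 2 * R * (u \<bullet> n) / (u \<bullet> u)"
    using next_time_sphere(1)[OF assms(1) outgoing] w_pa ww by simp
  show "a' \<in> sphere p R"
    using next_time_sphere(2)[OF assms(1) outgoing] by (simp add: a'_def)
  have normal': "inward_normal p R a' = n - (t / R) *\<^sub>R w"
    by (simp add: a'_def t_def n_def inward_normal_translate)
  have "w \<bullet> (n - (t / R) *\<^sub>R w) = - (u \<bullet> n) - (t / R) * (u \<bullet> u)"
    using wn ww by (simp add: inner_diff_right inner_commute)
  also have "\<dots> = u \<bullet> n"
    using \<open>R > 0\<close> \<open>u \<bullet> u > 0\<close> by (simp add: t_def t)
  finally show "w \<bullet> inward_normal p R a' = u \<bullet> n"
    by (simp add: normal')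
  show "rot90 (inward_normal p R a') \<bullet> w = rot90 n \<bullet> u"
    using inner_rot90_reflect[of n u]
    by (simp add: normal' rot90_diff rot90_scaleR inner_diff_left w_def)
qed

lemma collisions_rolling_invariant:
  assumes "\<gamma> \<noteq> 0" and "r \<noteq> 0" and "R > 0" and "in_so2 U0" and "a0 \<in> sphere p R"
    and "u0 \<bullet> inward_normal p R a0 < 0"
    and "rot90 (inward_normal p R a0) \<bullet> u0 = r * U0$2$1"
  shows "case collisions \<gamma> r p R (a0, u0, U0) k of (a, u, U) \<Rightarrow>
           a \<in> sphere p R \<and> U = U0 \<and> rot90 (inward_normal p R a) \<bullet> u = r * U0$2$1
         \<and> u \<bullet> inward_normal p R a = u0 \<bullet> inward_normal p R a0 \<and> u \<bullet> u = u0 \<bullet> u0"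
proof (induction k)
  case 0
  show ?case
    using assms by simp
next
  case (Suc k)
  obtain a u U where k: "collisions \<gamma> r p R (a0, u0, U0) k = (a, u, U)"
    by (metis prod_cases3)
  define n where "n = inward_normal p R a"
  have a: "a \<in> sphere p R" and "U = U0" and rolling: "rot90 n \<bullet> u = r * U0$2$1"
    and un: "u \<bullet> n = u0 \<bullet> inward_normal p R a0" and uu: "u \<bullet> u = u0 \<bullet> u0"
    using Suc.IH by (simp_all add: k n_def)
  have unit: "n \<bullet> n = 1"
    using inward_normal_unit[OF a] \<open>R > 0\<close> by (simp add: n_def)
  have "collision_map \<gamma> r n (u, U0) = (reflect n u, U0)"
    using collision_map_rolling[OF assms(1,2) unit assms(4) rolling] .
  moreover have "u \<bullet> n < 0"
    using un assms(6) by simp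
  note flight = flight_after_reflection[OF a \<open>R > 0\<close> this n_def refl refl]
  ultimately show ?case
    using flight(2-4) rolling un uu inner_reflect_reflect[OF unit, of u]
    by (simp add: k \<open>U = U0\<close> n_def[symmetric])
qed

lemma flight_time_rolling:
  assumes "\<gamma> \<noteq> 0" and "r \<noteq> 0" and "R > 0" and "in_so2 U0" and "a0 \<in> sphere p R"
    and "u0 \<bullet> inward_normal p R a0 < 0"
    and "rot90 (inward_normal p R a0) \<bullet> u0 = r * U0$2$1"
  shows "flight_time \<gamma> r p R (a0, u0, U0) k = - 2 * R * (u0 \<bullet> inward_normal p R a0) / (u0 \<bullet> u0)"
proof -
  obtain a u U where k: "collisions \<gamma> r p R (a0, u0, U0) k = (a, u, U)"
    by (metis prod_cases3)
  define n where "n = inward_normal p R a"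
  have a: "a \<in> sphere p R" and "U = U0" and rolling: "rot90 n \<bullet> u = r * U0$2$1"
    and un: "u \<bullet> n = u0 \<bullet> inward_normal p R a0" and uu: "u \<bullet> u = u0 \<bullet> u0"
    using collisions_rolling_invariant[OF assms, of k] by (simp_all add: k n_def)
  have "collision_map \<gamma> r n (u, U) = (reflect n u, U)"
    using collision_map_rolling[OF assms(1,2) _ assms(4) rolling] inward_normal_unit[OF a] assms(3)
    by (simp add: n_def \<open>U = U0\<close>)
  moreover have "next_time p R a (reflect n u) = - 2 * R * (u \<bullet> n) / (u \<bullet> u)"
    using flight_after_reflection(1)[OF a assms(3) _ n_def refl refl] un assms(6) by simp
  ultimately show ?thesis
    using un uu by (simp add: k flight_time_def n_def[symmetric])
qed

theorem proposition2p11: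
  fixes \<gamma> r R :: real and p a0 u0 :: "real^2" and U0 :: "real^2^2"
  assumes "\<gamma> > 0" and "r > 0" and "R > 0"
    and "in_so2 U0"
    and "a0 \<in> sphere p R"
    and "u0 \<bullet> inward_normal p R a0 < 0"
    and "rolling_impact p R r a0 u0 U0"
  shows "\<forall>k. (case collisions \<gamma> r p R (a0, u0, U0) k of (a, u, U) \<Rightarrow>
              a \<in> sphere p R \<and> rolling_impact p R r a u U
            \<and> fst (collision_map \<gamma> r (inward_normal p R a) (u, U))
                = u - (2 * (u \<bullet> inward_normal p R a)) *\<^sub>R inward_normal p R a)
          \<and> flight_time \<gamma> r p R (a0, u0, U0) k = flight_time \<gamma> r p R (a0, u0, U0) 0"
proof -
  have "\<gamma> \<noteq> 0" "r \<noteq> 0"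
    using assms(1,2) by simp_all
  have rolling0: "rot90 (inward_normal p R a0) \<bullet> u0 = r * U0$2$1"
    using rolling_impact_iff[OF assms(5) _ assms(4)] assms(3,7) by simp
  note invariant = collisions_rolling_invariant[OF \<open>\<gamma> \<noteq> 0\<close> \<open>r \<noteq> 0\<close> assms(3-6) rolling0]
    and flight = flight_time_rolling[OF \<open>\<gamma> \<noteq> 0\<close> \<open>r \<noteq> 0\<close> assms(3-6) rolling0]
  have "case collisions \<gamma> r p R (a0, u0, U0) k of (a, u, U) \<Rightarrow>
          a \<in> sphere p R \<and> rolling_impact p R r a u U
        \<and> fst (collision_map \<gamma> r (inward_normal p R a) (u, U))
            = u - (2 * (u \<bullet> inward_normal p R a)) *\<^sub>R inward_normal p R a" for k
  proof -
    obtain a u U where k: "collisions \<gamma> r p R (a0, u0, U0) k = (a, u, U)"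
      by (metis prod_cases3)
    have a: "a \<in> sphere p R" and "U = U0"
      and rolling: "rot90 (inward_normal p R a) \<bullet> u = r * U0$2$1"
      using invariant[of k] by (simp_all add: k)
    then show ?thesis
      using collision_map_rolling[OF \<open>\<gamma> \<noteq> 0\<close> \<open>r \<noteq> 0\<close> _ assms(4) rolling]
        inward_normal_unit[OF a] rolling_impact_iff[OF a _ assms(4)] assms(3)
      by (simp add: k reflect_def)
  qed
  with flight show ?thesis
    by simp
qed

end
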